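(* There exists an efficient, hence regret-free, strategy.
   Context: Let $\mathcal{X}$ be a finite set of alternatives. A proto-ranking is an irreflexive and transitive binary relation on $\mathcal{X}$; a ranking is a total proto-ranking; a tournament is a total and asymmetric binary relation on $\mathcal{X}$. The chair has a fixed preference $\succ$, a ranking on $\mathcal{X}$. Interaction: given a tournament $\mathrel{W}$, start from $R_0=\varnothing$; in each period with $R_{t-1}$ not total the chair offers a pair $\{x,y\}$ unranked by $R_{t-1}$, the winner is $x$ if $x\mathrel{W}y$ and $y$ otherwise, and $R_t$ is the transitive closure of $R_{t-1}\cup\{(\text{winner},\text{loser})\}$; stop when $R_t$ is total. A strategy assigns to each non-terminal history (sequence of (winner, loser) pairs) a pair unranked at it; its outcome under $\mathrel{W}$ is the final ranking. A ranking is $\mathrel{W}$-feasible if it is the outcome under $\mathrel{W}$ of some strategy. $R$ is more aligned with $\succ$ than $R'$ if for all $x\succ y$, $xR'y$ implies $xRy$. A ranking is $\mathrel{W}$-unimprovable if no other $\mathrel{W}$-feasible ranking is more aligned with $\succ$. A strategy is regret-free if for every tournament $\mathrel{W}$ its outcome under $\mathrel{W}$ is $\mathrel{W}$-unimprovable. A ranking $R$ is $\mathrel{W}$-efficient if $x\succ y$ and $x\mathrel{W}y$ imply $xRy$; a strategy is efficient if for every tournament $\mathrel{W}$ its outcome under $\mathrel{W}$ is $\mathrel{W}$-efficient. *)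

theory Defs
  imports Main
begin

definition proto_ranking :: "('a \<times> 'a) set \<Rightarrow> bool" where
  "proto_ranking R \<longleftrightarrow> irrefl R \<and> trans R"

definition ranking :: "('a \<times> 'a) set \<Rightarrow> bool" where
  "ranking R \<longleftrightarrow> proto_ranking R \<and> total R"

definition tournament :: "('a \<times> 'a) set \<Rightarrow> bool" where
  "tournament W \<longleftrightarrow> total W \<and> asym W"

text \<open>A history is a list of (winner, loser) pairs; its relation is obtained by
 repeatedly adding the pair and taking the transitive closure.\<close>

definition hist_rel :: "('a \<times> 'a) list \<Rightarrow> ('a \<times> 'a) set" where
  "hist_rel h = foldl (\<lambda>R p. trancl (insert p R)) {} h"

definition unranked :: "('a \<times> 'a) set \<Rightarrow> ('a \<times> 'a) \<Rightarrow> bool" where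
  "unranked R p \<longleftrightarrow> fst p \<noteq> snd p \<and> p \<notin> R \<and> (snd p, fst p) \<notin> R"

inductive valid_hist :: "('a \<times> 'a) list \<Rightarrow> bool" where
  Nil: "valid_hist []"
| step: "valid_hist h \<Longrightarrow> \<not> total (hist_rel h) \<Longrightarrow> unranked (hist_rel h) (x, y)
          \<Longrightarrow> valid_hist (h @ [(x, y)])"

text \<open>A strategy offers the pair {x,y}, represented by (x,y) (order irrelevant),
 which must be unranked at every non-terminal history.\<close>
definition is_strategy :: "(('a \<times> 'a) list \<Rightarrow> 'a \<times> 'a) \<Rightarrow> bool" where
  "is_strategy \<sigma> \<longleftrightarrow>
     (\<forall>h. valid_hist h \<longrightarrow> \<not> total (hist_rel h) \<longrightarrow> unranked (hist_rel h) (\<sigma> h))"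

definition winner_loser :: "('a \<times> 'a) set \<Rightarrow> 'a \<times> 'a \<Rightarrow> 'a \<times> 'a" where
  "winner_loser W p = (if p \<in> W then p else (snd p, fst p))"

fun play :: "(('a \<times> 'a) list \<Rightarrow> 'a \<times> 'a) \<Rightarrow> ('a \<times> 'a) set \<Rightarrow> nat \<Rightarrow> ('a \<times> 'a) list" where
  "play \<sigma> W 0 = []"
| "play \<sigma> W (Suc n) =
     (let h = play \<sigma> W n in
      if total (hist_rel h) then h else h @ [winner_loser W (\<sigma> h)])"

definition outcome :: "(('a \<times> 'a) list \<Rightarrow> 'a \<times> 'a) \<Rightarrow> ('a \<times> 'a) set \<Rightarrow> ('a \<times> 'a) set \<Rightarrow> bool" where
  "outcome \<sigma> W R \<longleftrightarrow> (\<exists>n. total (hist_rel (play \<sigma> W n)) \<and> R = hist_rel (play \<sigma> W n))"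

definition feasible :: "('a \<times> 'a) set \<Rightarrow> ('a \<times> 'a) set \<Rightarrow> bool" where
  "feasible W R \<longleftrightarrow> ranking R \<and> (\<exists>\<sigma>. is_strategy \<sigma> \<and> outcome \<sigma> W R)"

text \<open>P is the chair's preference; "R more aligned with P than R'".\<close>
definition more_aligned :: "('a \<times> 'a) set \<Rightarrow> ('a \<times> 'a) set \<Rightarrow> ('a \<times> 'a) set \<Rightarrow> bool" where
  "more_aligned P R R' \<longleftrightarrow> (\<forall>x y. (x, y) \<in> P \<longrightarrow> (x, y) \<in> R' \<longrightarrow> (x, y) \<in> R)"

definition unimprovable :: "('a \<times> 'a) set \<Rightarrow> ('a \<times> 'a) set \<Rightarrow> ('a \<times> 'a) set \<Rightarrow> bool" where
  "unimprovable P W R \<longleftrightarrow> ranking R \<and>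
     \<not> (\<exists>R'. R' \<noteq> R \<and> feasible W R' \<and> more_aligned P R' R)"

definition regret_free :: "('a \<times> 'a) set \<Rightarrow> (('a \<times> 'a) list \<Rightarrow> 'a \<times> 'a) \<Rightarrow> bool" where
  "regret_free P \<sigma> \<longleftrightarrow> is_strategy \<sigma> \<and>
     (\<forall>W. tournament W \<longrightarrow>
        (\<exists>R. outcome \<sigma> W R) \<and> (\<forall>R. outcome \<sigma> W R \<longrightarrow> unimprovable P W R))"

definition W_efficient :: "('a \<times> 'a) set \<Rightarrow> ('a \<times> 'a) set \<Rightarrow> ('a \<times> 'a) set \<Rightarrow> bool" where
  "W_efficient P W R \<longleftrightarrow> (\<forall>x y. (x, y) \<in> P \<longrightarrow> (x, y) \<in> W \<longrightarrow> (x, y) \<in> R)"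

definition efficient :: "('a \<times> 'a) set \<Rightarrow> (('a \<times> 'a) list \<Rightarrow> 'a \<times> 'a) \<Rightarrow> bool" where
  "efficient P \<sigma> \<longleftrightarrow> is_strategy \<sigma> \<and>
     (\<forall>W. tournament W \<longrightarrow>
        (\<exists>R. outcome \<sigma> W R) \<and> (\<forall>R. outcome \<sigma> W R \<longrightarrow> W_efficient P W R))"

end

theory Submission
  imports Defs
begin

text \<open>
  Efficiency implies regret-freeness: a feasible ranking is the transitive closure of pairs
  won in the tournament, so if it were strictly more aligned than an efficient ranking R,
  one of these pairs would reverse R, and that pair contradicts either the alignment or the
  efficiency of R.

  An efficient strategy is insertion sort along the chair's preference: the alternatives are
  inserted from the chair's favourite downwards, and the alternative being inserted is
  compared with the already ranked ones from the bottom up. Whatever the result of a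
  comparison, the only pair it forces against the chair's preference is the compared pair
  itself. Hence every reversal of the chair's preference in the outcome was won directly,
  which is efficiency.
\<close>

lemma ranking_irreflD: "ranking R \<Longrightarrow> (a, a) \<notin> R"
  by (simp add: ranking_def proto_ranking_def irrefl_def)

lemma ranking_transD: "ranking R \<Longrightarrow> (a, b) \<in> R \<Longrightarrow> (b, c) \<in> R \<Longrightarrow> (a, c) \<in> R"
  unfolding ranking_def proto_ranking_def by (meson transD)

lemma ranking_asymD: "ranking R \<Longrightarrow> (a, b) \<in> R \<Longrightarrow> (b, a) \<notin> R"
  by (meson ranking_irreflD ranking_transD)

lemma ranking_totalD: "ranking R \<Longrightarrow> a \<noteq> b \<Longrightarrow> (a, b) \<in> R \<or> (b, a) \<in> R"
  by (simp add: ranking_def total_on_def)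

lemma ranking_subset_eq:
  assumes "ranking R" "ranking R'" "R' \<subseteq> R"
  shows "R' = R"
proof (intro equalityI assms(3) subrelI)
  fix a b assume ab: "(a, b) \<in> R"
  then have "a \<noteq> b" using ranking_irreflD[OF assms(1)] by blast
  then have "(a, b) \<in> R' \<or> (b, a) \<in> R'" using ranking_totalD[OF assms(2)] by blast
  then show "(a, b) \<in> R'" using ab assms(3) ranking_asymD[OF assms(1)] by blast
qed

lemma wf_of_trans_irrefl:
  fixes R :: "('a::finite \<times> 'a) set"
  assumes "trans R" "irrefl R"
  shows "wf R"
  using assms by (simp add: finite_acyclic_wf acyclic_irrefl)

lemma trancl_insert_of_trans:
  assumes "trans R"
  shows "trancl (insert (w, l) R) = R \<union> {(a, b). (a, w) \<in> R\<^sup>= \<and> (l, b) \<in> R\<^sup>=}"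
  using assms by (simp add: trancl_insert rtrancl_trancl_reflcl)

lemma irrefl_trancl_insert:
  assumes "trans R" "irrefl R" "unranked R p"
  shows "irrefl (trancl (insert p R))"
proof -
  obtain w l where p: "p = (w, l)" by fastforce
  have "(a, a) \<notin> R \<union> {(a, b). (a, w) \<in> R\<^sup>= \<and> (l, b) \<in> R\<^sup>=}" for a
    using assms p unfolding unranked_def irrefl_def by (auto dest: transD)
  then show ?thesis using trancl_insert_of_trans[OF assms(1)] p by (simp add: irrefl_def)
qed

lemma unranked_psubset_trancl_insert:
  assumes "unranked R p"
  shows "R \<subset> trancl (insert p R)"
proof -
  have "insert p R \<subseteq> trancl (insert p R)" by (rule trancl_incr)
  moreover have "p \<notin> R" using assms by (cases p) (simp add: unranked_def)
  ultimately show ?thesis by blast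
qed

lemma unranked_swap_iff [simp]: "unranked R (prod.swap p) \<longleftrightarrow> unranked R p"
  by (cases p) (auto simp: unranked_def)

lemma not_total_imp_unranked: "\<not> total R \<Longrightarrow> \<exists>p. unranked R p"
  unfolding total_on_def unranked_def by auto

lemma hist_rel_Nil [simp]: "hist_rel [] = {}"
  by (simp add: hist_rel_def)

lemma hist_rel_snoc [simp]: "hist_rel (h @ [p]) = trancl (insert p (hist_rel h))"
  by (simp add: hist_rel_def)

lemma trancl_insert_trancl: "trancl (insert p (trancl R)) = trancl (insert p R)"
  by (metis insert_is_Un sup_commute trancl_trancl_Un)

lemma hist_rel_eq_trancl_set: "hist_rel h = trancl (set h)"
  by (induction h rule: rev_induct) (auto simp: trancl_insert_trancl)

lemma trans_hist_rel: "trans (hist_rel h)"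
  by (simp add: hist_rel_eq_trancl_set)

lemma winner_loser_cases: "winner_loser W p \<in> {p, prod.swap p}"
  by (cases p) (simp add: winner_loser_def)

lemma winner_loser_mem:
  assumes "tournament W"
  shows "winner_loser W p \<in> W \<union> Id"
  using assms unfolding winner_loser_def tournament_def total_on_def by (cases p) auto

lemma play_Suc_total: "total (hist_rel (play \<sigma> W n)) \<Longrightarrow> play \<sigma> W (Suc n) = play \<sigma> W n"
  by (simp add: Let_def)

lemma play_Suc_not_total:
  "\<not> total (hist_rel (play \<sigma> W n)) \<Longrightarrow>
     play \<sigma> W (Suc n) = play \<sigma> W n @ [winner_loser W (\<sigma> (play \<sigma> W n))]"
  by (simp add: Let_def)

lemma hist_rel_play_Suc:
  "\<not> total (hist_rel (play \<sigma> W n)) \<Longrightarrow>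
     hist_rel (play \<sigma> W (Suc n)) = trancl (insert (winner_loser W (\<sigma> (play \<sigma> W n))) (hist_rel (play \<sigma> W n)))"
  by (simp add: Let_def)

lemma set_play_subset: "tournament W \<Longrightarrow> set (play \<sigma> W n) \<subseteq> W \<union> Id"
  by (induction n) (auto simp: Let_def dest: winner_loser_mem)

declare play.simps(2) [simp del]

lemma valid_hist_play_unranked:
  assumes "is_strategy \<sigma>"
  shows "valid_hist (play \<sigma> W n)"
    and "\<not> total (hist_rel (play \<sigma> W n)) \<Longrightarrow>
           unranked (hist_rel (play \<sigma> W n)) (winner_loser W (\<sigma> (play \<sigma> W n)))"
proof -
  have step: "unranked (hist_rel h) (winner_loser W (\<sigma> h))"
    if "valid_hist h" "\<not> total (hist_rel h)" for h
    using assms that winner_loser_cases[of W "\<sigma> h"] unfolding is_strategy_def by auto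
  show valid: "valid_hist (play \<sigma> W n)"
  proof (induction n)
    case (Suc n)
    show ?case
    proof (cases "total (hist_rel (play \<sigma> W n))")
      case False
      obtain x y where "winner_loser W (\<sigma> (play \<sigma> W n)) = (x, y)" by fastforce
      then show ?thesis
        using step[OF Suc False] valid_hist.step[OF Suc False] play_Suc_not_total[OF False]
        by simp
    qed (simp add: Suc play_Suc_total)
  qed (simp add: valid_hist.Nil)
  show "\<not> total (hist_rel (play \<sigma> W n)) \<Longrightarrow>
          unranked (hist_rel (play \<sigma> W n)) (winner_loser W (\<sigma> (play \<sigma> W n)))"
    using step valid by blast
qed

lemma irrefl_hist_rel_play:
  assumes "is_strategy \<sigma>"
  shows "irrefl (hist_rel (play \<sigma> W n))"
proof (induction n)
  case (Suc n)
  then show ?case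
    using irrefl_trancl_insert[OF trans_hist_rel Suc valid_hist_play_unranked(2)[OF assms]]
    by (cases "total (hist_rel (play \<sigma> W n))") (simp_all add: play_Suc_total hist_rel_play_Suc)
qed (simp add: irrefl_def)

lemma play_terminates:
  fixes W :: "('a::finite \<times> 'a) set"
  assumes "is_strategy \<sigma>"
  shows "\<exists>n. total (hist_rel (play \<sigma> W n))"
proof -
  have progress: "total (hist_rel (play \<sigma> W n)) \<or> n \<le> card (hist_rel (play \<sigma> W n))" for n
  proof (induction n)
    case (Suc n)
    show ?case
    proof (cases "total (hist_rel (play \<sigma> W n))")
      case False
      then have "hist_rel (play \<sigma> W n) \<subset> hist_rel (play \<sigma> W (Suc n))"
        using unranked_psubset_trancl_insert[OF valid_hist_play_unranked(2)[OF assms False]]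
        by (simp add: hist_rel_play_Suc[OF False])
      then have "card (hist_rel (play \<sigma> W n)) < card (hist_rel (play \<sigma> W (Suc n)))"
        by (simp add: psubset_card_mono)
      then show ?thesis using Suc False by simp
    qed (simp add: play_Suc_total)
  qed simp
  let ?N = "Suc (card (UNIV :: ('a \<times> 'a) set))"
  have "card (hist_rel (play \<sigma> W ?N)) < ?N" by (simp add: card_mono le_imp_less_Suc)
  then show ?thesis using progress[of ?N] by auto
qed

lemma outcome_exists: "is_strategy \<sigma> \<Longrightarrow> \<exists>R. outcome \<sigma> (W :: ('a::finite \<times> 'a) set) R"
  unfolding outcome_def using play_terminates by blast

lemma outcome_ranking: "is_strategy \<sigma> \<Longrightarrow> outcome \<sigma> W R \<Longrightarrow> ranking R"
  unfolding outcome_def ranking_def proto_ranking_def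
  using irrefl_hist_rel_play trans_hist_rel by blast

lemma feasible_trancl_of_edges:
  assumes "tournament W" "feasible W R"
  obtains S where "S \<subseteq> W" "R = trancl S"
proof -
  obtain \<sigma> n where R: "R = hist_rel (play \<sigma> W n)" and "ranking R"
    using assms(2) unfolding feasible_def outcome_def by blast
  then have "set (play \<sigma> W n) \<inter> Id = {}"
    using ranking_irreflD r_into_trancl' by (fastforce simp: hist_rel_eq_trancl_set)
  then have "set (play \<sigma> W n) \<subseteq> W" using set_play_subset[OF assms(1)] by blast
  then show ?thesis using that R hist_rel_eq_trancl_set by blast
qed

lemma W_efficient_eq_if_more_aligned:
  assumes P: "ranking P" and R: "ranking R" and eff: "W_efficient P W R"
    and R': "ranking R'" "R' = trancl S" "S \<subseteq> W" and aligned: "more_aligned P R' R"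
  shows "R' = R"
proof (cases "S \<subseteq> R")
  case True
  then have "R' \<subseteq> R" using R' R unfolding ranking_def proto_ranking_def
    by (metis trancl_id trancl_mono_subset)
  then show ?thesis using ranking_subset_eq R R' by blast
next
  case False
  then obtain y x where yx: "(y, x) \<in> S" "(y, x) \<notin> R" by auto
  then have yx_R': "(y, x) \<in> R'" using R' by auto
  then have "x \<noteq> y" using ranking_irreflD[OF R'(1)] by blast
  then have xy_R: "(x, y) \<in> R" using ranking_totalD[OF R] yx(2) by blast
  have "(x, y) \<notin> P"
    using aligned xy_R yx_R' ranking_asymD[OF R'(1)] unfolding more_aligned_def by blast
  moreover have "(y, x) \<notin> P"
    using eff yx R'(3) unfolding W_efficient_def by blast
  ultimately show ?thesis using ranking_totalD[OF P \<open>x \<noteq> y\<close>] by blast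
qed

lemma W_efficient_unimprovable:
  assumes P: "ranking P" and W: "tournament W" and R: "ranking R" "W_efficient P W R"
  shows "unimprovable P W R"
  unfolding unimprovable_def
proof (intro conjI notI R(1))
  assume "\<exists>R'. R' \<noteq> R \<and> feasible W R' \<and> more_aligned P R' R"
  then obtain R' where R': "R' \<noteq> R" "feasible W R'" "more_aligned P R' R" by blast
  moreover obtain S where "S \<subseteq> W" "R' = trancl S"
    using feasible_trancl_of_edges[OF W R'(2)] by blast
  moreover have "ranking R'" using R'(2) unfolding feasible_def by blast
  ultimately show False using W_efficient_eq_if_more_aligned[OF P R] by blast
qed

lemma efficient_imp_regret_free:
  assumes "ranking P" "efficient P \<sigma>"
  shows "regret_free P \<sigma>"
  using assms W_efficient_unimprovable outcome_ranking
  unfolding efficient_def regret_free_def by blast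

abbreviation above :: "('a \<times> 'a) set \<Rightarrow> 'a \<Rightarrow> 'a set" where
  "above P y \<equiv> {z. (z, y) \<in> P}"

definition reversals_won :: "('a \<times> 'a) set \<Rightarrow> ('a \<times> 'a) set \<Rightarrow> ('a \<times> 'a) set \<Rightarrow> bool" where
  "reversals_won P W R \<longleftrightarrow> (\<forall>a b. (a, b) \<in> R \<longrightarrow> (b, a) \<in> P \<longrightarrow> (a, b) \<in> W)"

definition safe_insert :: "('a \<times> 'a) set \<Rightarrow> ('a \<times> 'a) set \<Rightarrow> 'a \<times> 'a \<Rightarrow> bool" where
  "safe_insert P R p \<longleftrightarrow> trancl (insert p R) - insert p R \<subseteq> P"

lemma reversals_won_trancl_insert:
  assumes "ranking P" "reversals_won P W R" "p \<in> W" "safe_insert P R p"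
  shows "reversals_won P W (trancl (insert p R))"
  unfolding reversals_won_def
proof (intro allI impI)
  fix a b assume ab: "(a, b) \<in> trancl (insert p R)" and ba: "(b, a) \<in> P"
  then have "(a, b) \<notin> P" using ranking_asymD[OF assms(1)] by blast
  then have "(a, b) \<in> insert p R" using ab assms(4) unfolding safe_insert_def by blast
  then show "(a, b) \<in> W" using ba assms(2,3) unfolding reversals_won_def by blast
qed

lemma W_efficient_if_reversals_won:
  assumes "ranking P" "tournament W" "total R" "reversals_won P W R"
  shows "W_efficient P W R"
  unfolding W_efficient_def
proof (intro allI impI)
  fix x y assume xy: "(x, y) \<in> P" "(x, y) \<in> W"
  then have "(y, x) \<notin> R"
    using assms(2,4) unfolding reversals_won_def tournament_def by (auto dest: asymD)
  moreover have "x \<noteq> y" using xy ranking_irreflD[OF assms(1)] by blast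
  ultimately show "(x, y) \<in> R" using assms(3) unfolding total_on_def by blast
qed

definition sorted_prefix :: "('a \<times> 'a) set \<Rightarrow> ('a \<times> 'a) set \<Rightarrow> 'a set \<Rightarrow> bool" where
  "sorted_prefix P R S \<longleftrightarrow>
     (\<forall>a b. (a, b) \<in> P \<longrightarrow> b \<in> S \<longrightarrow> a \<in> S) \<and> R \<subseteq> S \<times> S \<and> total_on S R"

text \<open>
  y is being inserted into R, a ranking of the alternatives preferred to y, and has so far
  beaten exactly the initial segment L of that ranking.
\<close>
definition inserting :: "('a \<times> 'a) set \<Rightarrow> ('a \<times> 'a) set \<Rightarrow> 'a \<Rightarrow> 'a set \<Rightarrow> bool" where
  "inserting P R y L \<longleftrightarrow>
     total_on (above P y) R \<and> L \<subseteq> above P y \<and> (\<forall>c\<in>L. \<forall>d\<in>above P y. (c, d) \<in> R \<longrightarrow> d \<in> L) \<and>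
     R = Restr R (above P y) \<union> {y} \<times> L"

definition insertion_state :: "('a \<times> 'a) set \<Rightarrow> ('a \<times> 'a) set \<Rightarrow> bool" where
  "insertion_state P R \<longleftrightarrow> (\<exists>S. sorted_prefix P R S) \<or> (\<exists>y L. inserting P R y L)"

lemma sorted_prefix_inserting:
  fixes P :: "('a::finite \<times> 'a) set"
  assumes P: "ranking P" and sorted: "sorted_prefix P R S" and "\<not> total R"
  obtains y where "inserting P R y {}" "above P y = S"
proof -
  have "S \<noteq> UNIV" using sorted assms(3) unfolding sorted_prefix_def by blast
  then obtain t where "t \<in> - S" by blast
  moreover have "wf P" using P by (simp add: wf_of_trans_irrefl ranking_def proto_ranking_def)
  ultimately obtain y where y: "y \<in> - S" and y_best: "\<And>z. (z, y) \<in> P \<Longrightarrow> z \<notin> - S"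
    by (metis wfE_min)
  have "above P y = S"
  proof
    show "above P y \<subseteq> S" using y_best by blast
    show "S \<subseteq> above P y"
    proof
      fix t assume "t \<in> S"
      moreover from this have "t \<noteq> y" using y by blast
      ultimately show "t \<in> above P y"
        using ranking_totalD[OF P] sorted y unfolding sorted_prefix_def by blast
    qed
  qed
  moreover have "inserting P R y {}"
    using sorted calculation unfolding sorted_prefix_def inserting_def by blast
  ultimately show ?thesis using that by blast
qed

lemma sorted_prefix_insert_above_iff:
  assumes "ranking P"
  shows "sorted_prefix P R (insert y (above P y)) \<longleftrightarrow>
    R \<subseteq> insert y (above P y) \<times> insert y (above P y) \<and> total_on (insert y (above P y)) R"
proof -
  have "a \<in> insert y (above P y)" if "(a, b) \<in> P" "b \<in> insert y (above P y)" for a b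
    using that ranking_transD[OF assms, of a b y] by blast
  then show ?thesis unfolding sorted_prefix_def by blast
qed

lemma inserting_complete:
  assumes "ranking P" "inserting P R y (above P y)"
  shows "sorted_prefix P R (insert y (above P y))"
proof -
  have R: "R = Restr R (above P y) \<union> {y} \<times> above P y" and tot: "total_on (above P y) R"
    using assms(2) unfolding inserting_def by blast+
  have "R \<subseteq> insert y (above P y) \<times> insert y (above P y)"
    by (subst R) blast
  moreover have "total_on (insert y (above P y)) R"
    using tot by (subst R) (auto simp: total_on_def)
  ultimately show ?thesis using sorted_prefix_insert_above_iff[OF assms(1)] by blast
qed

lemma insertion_state_progress:
  fixes P :: "('a::finite \<times> 'a) set"
  assumes P: "ranking P" and state: "insertion_state P R" and not_total: "\<not> total R"
  shows "\<exists>y L. inserting P R y L \<and> above P y - L \<noteq> {}"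
proof -
  have from_sorted: "\<exists>y L. inserting P R y L \<and> above P y - L \<noteq> {}"
    if "sorted_prefix P R S" "S \<noteq> {}" for S
    using sorted_prefix_inserting[OF P that(1) not_total] that(2) by (metis Diff_empty)
  have from_inserting: "\<exists>y L. inserting P R y L \<and> above P y - L \<noteq> {}"
    if ins: "inserting P R y L" for y L
  proof (cases "above P y - L = {}")
    case True
    then have "L = above P y" using ins unfolding inserting_def by blast
    then show ?thesis using from_sorted inserting_complete[OF P] ins by blast
  qed (use ins in blast)
  show ?thesis
  proof (cases "\<exists>S. sorted_prefix P R S")
    case True
    then obtain S where "sorted_prefix P R S" by blast
    then obtain y where "inserting P R y {}"
      using sorted_prefix_inserting[OF P _ not_total] by blast
    then show ?thesis using from_inserting by blast
  next
    case False
    then show ?thesis using state from_inserting unfolding insertion_state_def by blast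
  qed
qed

definition good_pair :: "('a \<times> 'a) set \<Rightarrow> ('a \<times> 'a) set \<Rightarrow> 'a \<times> 'a \<Rightarrow> bool" where
  "good_pair P R p \<longleftrightarrow> unranked R p \<and>
     (\<forall>q\<in>{p, prod.swap p}. safe_insert P R q \<and> insertion_state P (trancl (insert q R)))"

context
  fixes P R :: "('a \<times> 'a) set" and y x :: 'a and L :: "'a set"
  assumes P: "ranking P" and R_trans: "trans R" and R_irrefl: "irrefl R"
    and ins: "inserting P R y L" and x: "x \<in> above P y - L"
    and x_lowest: "\<And>z. z \<in> above P y - L \<Longrightarrow> z \<noteq> x \<Longrightarrow> (z, x) \<in> R"
begin

private lemma R_cases: "(a, b) \<in> R \<Longrightarrow> a \<in> above P y \<and> b \<in> above P y \<or> a = y \<and> b \<in> L"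
  using ins unfolding inserting_def by blast

private lemma R_eq: "R = Restr R (above P y) \<union> {y} \<times> L"
  using ins unfolding inserting_def by blast

private lemma y_above_L: "b \<in> L \<Longrightarrow> (y, b) \<in> R"
  using ins unfolding inserting_def by blast

private lemma L_above: "L \<subseteq> above P y"
  using ins unfolding inserting_def by blast

private lemma L_downward_closed: "c \<in> L \<Longrightarrow> d \<in> above P y \<Longrightarrow> (c, d) \<in> R \<Longrightarrow> d \<in> L"
  using ins unfolding inserting_def by blast

private lemma total_on_above: "total_on (above P y) R"
  using ins unfolding inserting_def by blast

private lemma y_not_above: "y \<notin> above P y"
  using ranking_irreflD[OF P] by blast

private lemma nothing_above_y: "(a, y) \<notin> R"
  using R_cases L_above y_not_above by blast

private lemma below_x_in_L: "(x, b) \<in> R \<Longrightarrow> b \<in> L"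
proof (rule ccontr)
  assume xb: "(x, b) \<in> R" and "b \<notin> L"
  have "x \<noteq> y" using x y_not_above by blast
  then have "b \<in> above P y" using R_cases[OF xb] by blast
  moreover have "b \<noteq> x" using xb R_irrefl by (metis irrefl_def)
  ultimately have "(b, x) \<in> R" using x_lowest \<open>b \<notin> L\<close> by blast
  then have "(x, x) \<in> R" using transD[OF R_trans xb] by blast
  then show False using R_irrefl by (simp add: irrefl_def)
qed

private lemma L_below_x: "b \<in> L \<Longrightarrow> (x, b) \<in> R"
proof -
  assume b: "b \<in> L"
  then have "b \<noteq> x" using x by blast
  then have "(x, b) \<in> R \<or> (b, x) \<in> R"
    using total_on_above x b L_above unfolding total_on_def by blast
  then show "(x, b) \<in> R" using L_downward_closed b x by blast
qed

lemma unranked_lowest: "unranked R (x, y)"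
  using x y_not_above nothing_above_y R_cases unfolding unranked_def by auto

lemma trancl_insert_y_lowest: "trancl (insert (y, x) R) = insert (y, x) R"
  using trancl_insert_of_trans[OF R_trans, of y x] nothing_above_y below_x_in_L y_above_L by auto

lemma inserting_insert_y_lowest: "inserting P (insert (y, x) R) y (insert x L)"
proof -
  let ?A = "above P y"
  have "Restr (insert (y, x) R) ?A = Restr R ?A" using y_not_above by blast
  moreover have "insert (y, x) R = insert (y, x) (Restr R ?A \<union> {y} \<times> L)"
    using arg_cong[where f = "insert (y, x)", OF R_eq] .
  ultimately have eq: "insert (y, x) R = Restr (insert (y, x) R) ?A \<union> {y} \<times> insert x L"
    by auto
  have "d \<in> insert x L" if "c \<in> insert x L" "d \<in> ?A" "(c, d) \<in> insert (y, x) R" for c d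
    using that x y_not_above L_above below_x_in_L L_downward_closed by blast
  moreover have "total_on ?A (insert (y, x) R)"
    using total_on_above unfolding total_on_def by blast
  ultimately show ?thesis using eq x L_above unfolding inserting_def by blast
qed

lemma safe_insert_lowest_y: "safe_insert P R (x, y)"
  unfolding safe_insert_def
proof (rule subrelI)
  fix a b assume "(a, b) \<in> trancl (insert (x, y) R) - insert (x, y) R"
  then have ab: "(a, x) \<in> R\<^sup>=" "(y, b) \<in> R\<^sup>=" "(a, b) \<notin> R"
    unfolding trancl_insert_of_trans[OF R_trans] by auto
  have "a \<in> above P y" using ab(1) x R_cases by auto
  moreover have "b = y"
  proof (rule ccontr)
    assume "b \<noteq> y"
    then have "b \<in> L" using ab(2) R_cases y_not_above by auto
    then have "(x, b) \<in> R" by (rule L_below_x)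
    then show False using ab(1,3) transD[OF R_trans] by blast
  qed
  ultimately show "(a, b) \<in> P" by simp
qed

lemma sorted_prefix_insert_lowest_y:
  "sorted_prefix P (trancl (insert (x, y) R)) (insert y (above P y))"
proof -
  let ?S = "insert y (above P y)"
  have R': "trancl (insert (x, y) R) = R \<union> {(a, b). (a, x) \<in> R\<^sup>= \<and> (y, b) \<in> R\<^sup>=}"
    by (rule trancl_insert_of_trans[OF R_trans])
  have above_x: "a \<in> above P y" if "(a, x) \<in> R\<^sup>=" for a
    using that x R_cases by auto
  have below_y: "b \<in> L" if "(y, b) \<in> R" for b
    using that R_cases y_not_above by blast
  have "R \<subseteq> ?S \<times> ?S"
  proof (rule subrelI)
    fix a b assume "(a, b) \<in> R"
    then show "(a, b) \<in> ?S \<times> ?S" using R_cases L_above by blast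
  qed
  moreover have "(a, b) \<in> ?S \<times> ?S" if "(a, x) \<in> R\<^sup>=" "(y, b) \<in> R\<^sup>=" for a b
    using that above_x below_y L_above by blast
  moreover have "(y, b) \<in> R \<or> (b, x) \<in> R\<^sup>=" if "b \<in> above P y" for b
    using that y_above_L x_lowest by blast
  then have "total_on ?S (trancl (insert (x, y) R))"
    unfolding R' total_on_def using total_on_above unfolding total_on_def by blast
  ultimately show ?thesis
    unfolding sorted_prefix_insert_above_iff[OF P] R' by blast
qed

lemma good_pair_lowest: "good_pair P R (x, y)"
  unfolding good_pair_def insertion_state_def
  using unranked_lowest safe_insert_lowest_y sorted_prefix_insert_lowest_y
    trancl_insert_y_lowest inserting_insert_y_lowest
  by (auto simp: safe_insert_def)

end

lemma exists_good_pair: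
  fixes P :: "('a::finite \<times> 'a) set"
  assumes P: "ranking P" and R: "trans R" "irrefl R"
    and state: "insertion_state P R" and not_total: "\<not> total R"
  shows "\<exists>p. good_pair P R p"
proof -
  obtain y L where ins: "inserting P R y L" and "above P y - L \<noteq> {}"
    using insertion_state_progress[OF P state not_total] by blast
  then obtain x0 where "x0 \<in> above P y - L" by blast
  moreover have "wf (R\<inverse>)" using R by (simp add: wf_of_trans_irrefl irrefl_def)
  ultimately obtain x where x: "x \<in> above P y - L"
    and x_min: "\<And>z. (x, z) \<in> R \<Longrightarrow> z \<notin> above P y - L"
    by (metis converse_iff wfE_min)
  have "(z, x) \<in> R" if "z \<in> above P y - L" "z \<noteq> x" for z
    using that x x_min ins unfolding inserting_def total_on_def by blast
  then show ?thesis using good_pair_lowest[OF P R ins x] by blast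
qed

text \<open>
  The fallback branch only matters at histories the strategy never produces itself, which
  need not be insertion states.
\<close>
definition insertion_strategy :: "('a \<times> 'a) set \<Rightarrow> ('a \<times> 'a) list \<Rightarrow> 'a \<times> 'a" where
  "insertion_strategy P h =
     (let R = hist_rel h in
      if \<exists>p. good_pair P R p then SOME p. good_pair P R p else SOME p. unranked R p)"

lemma insertion_strategy_good_pair:
  assumes "\<exists>p. good_pair P (hist_rel h) p"
  shows "good_pair P (hist_rel h) (insertion_strategy P h)"
  using assms unfolding insertion_strategy_def by (simp add: someI_ex)

lemma is_strategy_insertion_strategy:
  fixes P :: "('a \<times> 'a) set"
  shows "is_strategy (insertion_strategy P)"
  unfolding is_strategy_def
proof (intro allI impI)
  fix h :: "('a \<times> 'a) list" assume not_total: "\<not> total (hist_rel h)"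
  show "unranked (hist_rel h) (insertion_strategy P h)"
  proof (cases "\<exists>p. good_pair P (hist_rel h) p")
    case True
    then show ?thesis using insertion_strategy_good_pair unfolding good_pair_def by blast
  next
    case False
    then show ?thesis using someI_ex[OF not_total_imp_unranked[OF not_total]]
      unfolding insertion_strategy_def by (simp add: Let_def)
  qed
qed

lemma insertion_strategy_invariant:
  fixes P :: "('a::finite \<times> 'a) set"
  assumes P: "ranking P" and W: "tournament W"
  shows "insertion_state P (hist_rel (play (insertion_strategy P) W n)) \<and>
    reversals_won P W (hist_rel (play (insertion_strategy P) W n))"
proof (induction n)
  case 0
  have "sorted_prefix P {} {}" unfolding sorted_prefix_def by simp
  then show ?case unfolding insertion_state_def reversals_won_def by auto
next
  case (Suc n)
  define h where "h = play (insertion_strategy P) W n"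
  define R where "R = hist_rel h"
  show ?case
  proof (cases "total R")
    case True
    then show ?thesis using Suc play_Suc_total unfolding R_def h_def by metis
  next
    case False
    have "trans R" "irrefl R" "insertion_state P R"
      using trans_hist_rel irrefl_hist_rel_play[OF is_strategy_insertion_strategy] Suc
      unfolding R_def h_def by blast+
    then have good: "good_pair P R (insertion_strategy P h)"
      using exists_good_pair[OF P _ _ _ False] insertion_strategy_good_pair
      unfolding R_def by blast
    define q where "q = winner_loser W (insertion_strategy P h)"
    have q_swap: "q \<in> {insertion_strategy P h, prod.swap (insertion_strategy P h)}"
      unfolding q_def by (rule winner_loser_cases)
    have "unranked R q" using good q_swap unfolding good_pair_def by auto
    then have "q \<in> W" using winner_loser_mem[OF W] unfolding q_def unranked_def by fastforce
    moreover have "safe_insert P R q" "insertion_state P (trancl (insert q R))"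
      using good q_swap unfolding good_pair_def by blast+
    moreover have "hist_rel (play (insertion_strategy P) W (Suc n)) = trancl (insert q R)"
      using hist_rel_play_Suc False unfolding q_def R_def h_def by blast
    ultimately show ?thesis
      using reversals_won_trancl_insert[OF P] Suc unfolding R_def h_def by auto
  qed
qed

lemma efficient_insertion_strategy:
  fixes P :: "('a::finite \<times> 'a) set"
  assumes P: "ranking P"
  shows "efficient P (insertion_strategy P)"
  unfolding efficient_def
proof (intro conjI allI impI is_strategy_insertion_strategy)
  fix W :: "('a \<times> 'a) set" and R assume W: "tournament W"
  show "\<exists>R. outcome (insertion_strategy P) W R"
    by (rule outcome_exists[OF is_strategy_insertion_strategy])
  assume "outcome (insertion_strategy P) W R"
  then obtain n where "total R" and "R = hist_rel (play (insertion_strategy P) W n)"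
    unfolding outcome_def by blast
  then show "W_efficient P W R"
    using W_efficient_if_reversals_won[OF P W] insertion_strategy_invariant[OF P W] by blast
qed

theorem corollary2:
  fixes P :: "('a::finite \<times> 'a) set"
  assumes "ranking P"
  shows "\<exists>\<sigma>. efficient P \<sigma> \<and> regret_free P \<sigma>"
  using efficient_insertion_strategy[OF assms] efficient_imp_regret_free[OF assms] by blast

end
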